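(* Let $\mu$ be a probability measure on $\mathrm{Homeo}_+(\mathbb{R})$ with finite or countable support. If there exists $\varepsilon>0$ such that $\phi_+(x)\ge\varepsilon$ for all $x\in\mathbb{R}$, then $\phi_+\equiv 1$. Symmetrically, if there exists $\varepsilon>0$ such that $\phi_-(x)\ge\varepsilon$ for all $x\in\mathbb{R}$, then $\phi_-\equiv1$.
   Context: Setup. Let $\mu$ be a probability measure on the group $\mathrm{Homeo}_+(\mathbb{R})$ of orientation-preserving homeomorphisms of $\mathbb{R}$, supported on a finite or countable set $\{f_1,f_2,\dots\}$ with $p_i=\mu(\{f_i\})>0$, $\sum_i p_i=1$. Let $g_1,g_2,\dots$ be i.i.d. random maps with law $\mu$, and set $F_0=\mathrm{id}$, $F_n=g_n\circ\cdots\circ g_1$. For $x\in\mathbb{R}$ let $\phi_+(x)=\mathbb{P}(\lim_n F_n(x)=+\infty)$ and $\phi_-(x)=\mathbb{P}(\lim_n F_n(x)=-\infty)$. *)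

theory Defs
  imports "HOL-Probability.Probability"
begin

text \<open>The measure mu on Homeo_+(R) with countable support {f_1, f_2, ...} is encoded by
  an index distribution p :: nat pmf (weights p_i) and a labelling f :: nat => real => real;
  the law of one random map is map_pmf f p.  The i.i.d. sequence g_1, g_2, ... is the
  stream of indices distributed according to the product measure.\<close>

definition homeo_plus :: "(real \<Rightarrow> real) \<Rightarrow> bool" where
  "homeo_plus h \<longleftrightarrow> (\<exists>g. homeomorphism UNIV UNIV h g) \<and> strict_mono h"

text \<open>walk f w n = F_n = g_n o ... o g_1, where g_(k+1) = f (w !! k).\<close>
primrec walk :: "(nat \<Rightarrow> real \<Rightarrow> real) \<Rightarrow> nat stream \<Rightarrow> nat \<Rightarrow> real \<Rightarrow> real" where
  "walk f w 0 = id"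
| "walk f w (Suc n) = f (w !! n) \<circ> walk f w n"

definition iid_space :: "nat pmf \<Rightarrow> nat stream measure" where
  "iid_space p = stream_space (measure_pmf p)"

definition phi_plus :: "nat pmf \<Rightarrow> (nat \<Rightarrow> real \<Rightarrow> real) \<Rightarrow> real \<Rightarrow> real" where
  "phi_plus p f x = measure (iid_space p)
     {w \<in> space (iid_space p). filterlim (\<lambda>n. walk f w n x) at_top sequentially}"

definition phi_minus :: "nat pmf \<Rightarrow> (nat \<Rightarrow> real \<Rightarrow> real) \<Rightarrow> real \<Rightarrow> real" where
  "phi_minus p f x = measure (iid_space p)
     {w \<in> space (iid_space p). filterlim (\<lambda>n. walk f w n x) at_bot sequentially}"

end

(*
  Write A x for the event that the walk started at x tends to +\<infinity> (resp. -\<infinity>).  After a first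
  step t the walk restarts from f t x, so t ## w \<in> A x iff w \<in> A (f t x).  Hence, given the
  first n steps, the conditional probability of A x is the probability of A at the current
  position, which is at least \<epsilon>; that is, P (A x \<inter> C) \<ge> \<epsilon> P C for every cylinder C.
  Cylinders form an algebra generating the product \<sigma>-algebra, so every event is approximated by
  cylinders in measure and the inequality extends to all events.  Applied to the complement of A x
  it gives P (A x) = 1.
*)

theory Submission
  imports Defs
begin

definition approximable_in :: "'a measure \<Rightarrow> 'a set set \<Rightarrow> 'a set \<Rightarrow> bool" where
  "approximable_in M R B \<longleftrightarrow> (\<forall>\<delta>>0. \<exists>C\<in>R. measure M (sym_diff B C) < \<delta>)"

context finite_measure
begin

lemma measure_sym_diff_triangle:
  assumes "A \<in> sets M" "B \<in> sets M" "C \<in> sets M"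
  shows "measure M (sym_diff A C) \<le> measure M (sym_diff A B) + measure M (sym_diff B C)"
proof -
  have "measure M (sym_diff A C) \<le> measure M (sym_diff A B \<union> sym_diff B C)"
    by (rule finite_measure_mono) (use assms in auto)
  also have "\<dots> \<le> measure M (sym_diff A B) + measure M (sym_diff B C)"
    by (rule measure_subadditive) (use assms in auto)
  finally show ?thesis .
qed

lemma measure_sym_diff_Un:
  assumes "A \<in> sets M" "B \<in> sets M" "C \<in> sets M" "D \<in> sets M"
  shows "measure M (sym_diff (A \<union> B) (C \<union> D)) \<le> measure M (sym_diff A C) + measure M (sym_diff B D)"
proof -
  have "measure M (sym_diff (A \<union> B) (C \<union> D)) \<le> measure M (sym_diff A C \<union> sym_diff B D)"
    by (rule finite_measure_mono) (use assms in auto)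
  also have "\<dots> \<le> measure M (sym_diff A C) + measure M (sym_diff B D)"
    by (rule measure_subadditive) (use assms in auto)
  finally show ?thesis .
qed

lemma measure_diff_le_measure_sym_diff:
  assumes "A \<in> sets M" "B \<in> sets M"
  shows "measure M A - measure M B \<le> measure M (sym_diff A B)"
proof -
  have "measure M A - measure M B \<le> measure M A - measure M (A \<inter> B)"
    using assms by (simp add: finite_measure_mono)
  also have "\<dots> = measure M (A - B)"
    using assms by (simp add: finite_measure_Diff')
  also have "\<dots> \<le> measure M (sym_diff A B)"
    using assms by (intro finite_measure_mono) auto
  finally show ?thesis .
qed

context
  fixes R :: "'a set set"
  assumes algebra: "algebra (space M) R" and sets_eq: "sets M = sigma_sets (space M) R"
begin

interpretation R: algebra "space M" R
  by (rule algebra)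

lemma generator_subset_sets: "R \<subseteq> sets M"
  by (simp add: sets_eq sigma_sets.Basic subsetI)

lemma approximable_in_limit:
  assumes "B \<in> sets M"
    and "\<And>\<delta>. \<delta> > 0 \<Longrightarrow> \<exists>B'\<in>sets M. approximable_in M R B' \<and> measure M (sym_diff B B') < \<delta>"
  shows "approximable_in M R B"
  unfolding approximable_in_def
proof (intro allI impI)
  fix \<delta> :: real assume "\<delta> > 0"
  then obtain B' where B': "B' \<in> sets M" "approximable_in M R B'" "measure M (sym_diff B B') < \<delta>/2"
    using assms(2) half_gt_zero by blast
  then obtain C where C: "C \<in> R" "measure M (sym_diff B' C) < \<delta>/2"
    using \<open>\<delta> > 0\<close> unfolding approximable_in_def by (meson half_gt_zero)
  have "measure M (sym_diff B C) \<le> measure M (sym_diff B B') + measure M (sym_diff B' C)"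
    using assms(1) B'(1) C(1) generator_subset_sets by (intro measure_sym_diff_triangle) auto
  with B'(3) C(2) show "\<exists>C\<in>R. measure M (sym_diff B C) < \<delta>"
    using C(1) by (intro bexI[of _ C]) auto
qed

lemma approximable_in_compl:
  assumes "B \<subseteq> space M" "approximable_in M R B"
  shows "approximable_in M R (space M - B)"
  unfolding approximable_in_def
proof (intro allI impI)
  fix \<delta> :: real assume "\<delta> > 0"
  then obtain C where C: "C \<in> R" "measure M (sym_diff B C) < \<delta>"
    using assms(2) unfolding approximable_in_def by blast
  moreover have "sym_diff (space M - B) (space M - C) = sym_diff B C"
    using assms(1) C(1) generator_subset_sets sets.sets_into_space by blast
  ultimately show "\<exists>C\<in>R. measure M (sym_diff (space M - B) C) < \<delta>"
    using R.compl_sets by metis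
qed

lemma approximable_in_Un:
  assumes "B\<^sub>1 \<in> sets M" "B\<^sub>2 \<in> sets M" "approximable_in M R B\<^sub>1" "approximable_in M R B\<^sub>2"
  shows "approximable_in M R (B\<^sub>1 \<union> B\<^sub>2)"
  unfolding approximable_in_def
proof (intro allI impI)
  fix \<delta> :: real assume "\<delta> > 0"
  then obtain C\<^sub>1 C\<^sub>2 where C: "C\<^sub>1 \<in> R" "measure M (sym_diff B\<^sub>1 C\<^sub>1) < \<delta>/2"
      "C\<^sub>2 \<in> R" "measure M (sym_diff B\<^sub>2 C\<^sub>2) < \<delta>/2"
    using assms(3,4) unfolding approximable_in_def by (meson half_gt_zero)
  then have "measure M (sym_diff (B\<^sub>1 \<union> B\<^sub>2) (C\<^sub>1 \<union> C\<^sub>2)) < \<delta>"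
    using measure_sym_diff_Un[of B\<^sub>1 B\<^sub>2 C\<^sub>1 C\<^sub>2] assms(1,2) generator_subset_sets by fastforce
  then show "\<exists>C\<in>R. measure M (sym_diff (B\<^sub>1 \<union> B\<^sub>2) C) < \<delta>"
    using C(1,3) R.Un by blast
qed

lemma approximable_in_UN:
  assumes "\<And>i. B i \<in> sets M" "\<And>i. approximable_in M R (B i)"
  shows "approximable_in M R (\<Union>i::nat. B i)"
proof (rule approximable_in_limit)
  have finite_UN: "approximable_in M R (\<Union>i<n. B i)" for n
  proof (induction n)
    case 0
    show ?case
      using R.empty_sets by (auto simp: approximable_in_def intro!: bexI[of _ "{}"])
  next
    case (Suc n)
    then show ?case
      using assms approximable_in_Un[of "\<Union>i<n. B i" "B n"] by (simp add: lessThan_Suc Un_commute)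
  qed
  have "(\<lambda>n. measure M (\<Union>i<n. B i)) \<longlonglongrightarrow> measure M (\<Union>n. \<Union>i<n. B i)"
    using assms(1) by (intro finite_Lim_measure_incseq) (auto simp: incseq_def, force)
  moreover have "(\<Union>n. \<Union>i<n. B i) = (\<Union>i. B i)"
    by blast
  ultimately have "(\<lambda>n. measure M (\<Union>i. B i) - measure M (\<Union>i<n. B i))
      \<longlonglongrightarrow> measure M (\<Union>i. B i) - measure M (\<Union>i. B i)"
    by (intro tendsto_diff tendsto_const) simp
  then have lim: "(\<lambda>n. measure M (\<Union>i. B i) - measure M (\<Union>i<n. B i)) \<longlonglongrightarrow> 0"
    by simp
  fix \<delta> :: real assume "\<delta> > 0"
  with lim obtain n where "measure M (\<Union>i. B i) - measure M (\<Union>i<n. B i) < \<delta>"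
    by (auto dest!: order_tendstoD(2)[of _ 0 _ \<delta>] simp: eventually_sequentially) blast
  moreover have "measure M (sym_diff (\<Union>i. B i) (\<Union>i<n. B i)) = measure M (\<Union>i. B i) - measure M (\<Union>i<n. B i)"
    using assms(1) by (subst finite_measure_Diff[symmetric]) (auto intro!: arg_cong[where f="measure M"])
  ultimately show "\<exists>B'\<in>sets M. approximable_in M R B' \<and> measure M (sym_diff (\<Union>i. B i) B') < \<delta>"
    using assms(1) finite_UN by (intro bexI[of _ "\<Union>i<n. B i"]) auto
qed (use assms in auto)

lemma approximable_in_sets:
  assumes "B \<in> sets M"
  shows "approximable_in M R B"
proof -
  have "B \<in> sigma_sets (space M) R"
    using assms sets_eq by simp
  from R.Int_stable R.space_closed this
  show ?thesis
  proof (induction rule: sigma_sets_induct_disjoint)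
    case (basic C)
    then show ?case
      by (auto simp: approximable_in_def intro!: bexI[of _ C])
  next
    case empty
    show ?case
      using R.empty_sets by (auto simp: approximable_in_def intro!: bexI[of _ "{}"])
  next
    case (compl C)
    then show ?case
      using approximable_in_compl sets.sets_into_space sets_eq by auto
  next
    case (union C)
    then show ?case
      by (intro approximable_in_UN) (auto simp: sets_eq)
  qed
qed

lemma measure_Int_ge_of_generator:
  assumes A: "A \<in> sets M" and "0 \<le> c"
    and ge: "\<And>C. C \<in> R \<Longrightarrow> c * measure M C \<le> measure M (A \<inter> C)"
    and B: "B \<in> sets M"
  shows "c * measure M B \<le> measure M (A \<inter> B)"
proof (rule field_le_epsilon)
  fix t :: real assume "t > 0"
  then obtain C where C: "C \<in> R" "measure M (sym_diff B C) < t / (1 + c)"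
    using approximable_in_sets[OF B] \<open>0 \<le> c\<close> unfolding approximable_in_def
    by (meson add_pos_nonneg divide_pos_pos zero_less_one)
  let ?d = "measure M (sym_diff B C)"
  have C_sets: "C \<in> sets M"
    using C(1) generator_subset_sets by blast
  have "c * measure M B \<le> c * (measure M C + ?d)"
    using measure_diff_le_measure_sym_diff[OF B C_sets] \<open>0 \<le> c\<close> by (simp add: mult_left_mono)
  also have "\<dots> \<le> measure M (A \<inter> C) + c * ?d"
    using ge[OF C(1)] by (simp add: distrib_left)
  also have "measure M (A \<inter> C) \<le> measure M (A \<inter> B) + ?d"
  proof -
    have "measure M (A \<inter> C) - measure M (A \<inter> B) \<le> measure M (sym_diff (A \<inter> C) (A \<inter> B))"
      using A B C_sets by (intro measure_diff_le_measure_sym_diff) auto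
    also have "\<dots> \<le> ?d"
      using B C_sets by (intro finite_measure_mono) auto
    finally show ?thesis by simp
  qed
  also have "measure M (A \<inter> B) + ?d + c * ?d = measure M (A \<inter> B) + (1 + c) * ?d"
    by (simp add: algebra_simps)
  also have "(1 + c) * ?d \<le> t"
    using C(2) \<open>0 \<le> c\<close> by (simp add: field_simps)
  finally show "c * measure M B \<le> measure M (A \<inter> B) + t"
    by simp
qed

end

end

definition cylinders :: "'a stream set set" where
  "cylinders = {{w. stake n w \<in> L} | n L. True}"

lemma cylinders_stake: "{w. stake n w \<in> L} \<in> cylinders"
  unfolding cylinders_def by blast

lemma cylinders_cases:
  assumes "C \<in> cylinders"
  obtains n L where "C = {w. stake n w \<in> L}"
  using assms unfolding cylinders_def by blast

lemma cylinder_stake_take: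
  "n \<le> m \<Longrightarrow> {w. stake n w \<in> L} = {w. stake m w \<in> {l. take n l \<in> L}}"
  by (auto simp: take_stake min_absorb1)

lemma cylinder_in_sets:
  "{w. stake n w \<in> L} \<in> sets (stream_space (count_space (UNIV :: 'a::countable set)))"
proof -
  have "{w. stake n w \<in> L} = stake n -` L \<inter> space (stream_space (count_space (UNIV :: 'a set)))"
    by (auto simp: space_stream_space)
  then show ?thesis
    by (metis measurable_sets[OF measurable_stake] sets_UNIV UNIV_I)
qed

lemma algebra_cylinders: "algebra UNIV (cylinders :: 'a stream set set)"
  unfolding algebra_iff_Un
proof (intro conjI ballI)
  show "{} \<in> cylinders"
    using cylinders_stake[of 0 "{}"] by simp
next
  fix C :: "'a stream set" assume "C \<in> cylinders"
  then obtain n L where "C = {w. stake n w \<in> L}"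
    by (rule cylinders_cases)
  then have "UNIV - C = {w. stake n w \<in> - L}"
    by auto
  then show "UNIV - C \<in> cylinders"
    by (simp only: cylinders_stake)
next
  fix C D :: "'a stream set" assume "C \<in> cylinders" "D \<in> cylinders"
  then obtain n L n' L' where "C = {w. stake n w \<in> L}" "D = {w. stake n' w \<in> L'}"
    by (metis cylinders_cases)
  then have "C \<union> D = {w. stake (max n n') w \<in> {l. take n l \<in> L} \<union> {l. take n' l \<in> L'}}"
    using cylinder_stake_take[of n "max n n'" L] cylinder_stake_take[of n' "max n n'" L'] by auto
  then show "C \<union> D \<in> cylinders"
    by (simp only: cylinders_stake)
qed simp

lemma sets_stream_space_cylinders:
  "sets (stream_space (count_space (UNIV :: 'a::countable set))) = sigma_sets UNIV cylinders"
proof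
  have "sets (stream_space (count_space (UNIV :: 'a set)))
      = sigma_sets UNIV (sstart UNIV ` lists UNIV \<union> {{}})"
    by (simp add: sets_stream_space_sstart)
  also have "\<dots> \<subseteq> sigma_sets UNIV cylinders"
  proof (rule sigma_sets_mono')
    have "sstart UNIV l \<in> cylinders" for l :: "'a list"
    proof -
      have "sstart UNIV l = {w. stake (length l) w \<in> {l}}"
        by (auto simp: sstart_eq list_eq_iff_nth_eq)
      then show ?thesis
        by (simp only: cylinders_stake)
    qed
    then have "sstart UNIV ` lists (UNIV :: 'a set) \<subseteq> cylinders"
      by blast
    moreover have "{} \<in> (cylinders :: 'a stream set set)"
      using cylinders_stake[of 0 "{}"] by simp
    ultimately show "sstart UNIV ` lists (UNIV :: 'a set) \<union> {{}} \<subseteq> cylinders"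
      by simp
  qed
  finally show "sets (stream_space (count_space (UNIV :: 'a set))) \<subseteq> sigma_sets UNIV cylinders" .
next
  have "C \<in> sets (stream_space (count_space (UNIV :: 'a set)))" if "C \<in> cylinders" for C
    using that by (metis cylinders_cases cylinder_in_sets)
  then show "sigma_sets UNIV cylinders \<subseteq> sets (stream_space (count_space (UNIV :: 'a set)))"
    using sets.sigma_sets_subset[of cylinders "stream_space (count_space UNIV)"]
    by (auto simp: space_stream_space)
qed

lemma sets_stream_space_measure_pmf:
  "sets (stream_space (measure_pmf p)) = sets (stream_space (count_space UNIV))"
  by (rule sets_stream_space_cong) simp

lemma emeasure_Int_cylinder_ge:
  fixes p :: "'a::countable pmf" and A :: "'b \<Rightarrow> 'a stream set"
  assumes A_Cons: "\<And>t w y. t ## w \<in> A y \<longleftrightarrow> w \<in> A (T t y)"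
    and A_sets: "\<And>y. A y \<in> sets (stream_space (measure_pmf p))"
    and A_ge: "\<And>y. c \<le> emeasure (stream_space (measure_pmf p)) (A y)"
  shows "c * emeasure (stream_space (measure_pmf p)) {w. stake n w \<in> L}
      \<le> emeasure (stream_space (measure_pmf p)) (A x \<inter> {w. stake n w \<in> L})"
proof (induction n arbitrary: x L)
  case 0
  have "emeasure (stream_space (measure_pmf p)) UNIV = 1"
    using prob_space.emeasure_space_1[OF prob_space.prob_space_stream_space[OF prob_space_measure_pmf]]
    by (simp add: space_stream_space)
  then show ?case
    using A_ge[of x] by (cases "[] \<in> L") auto
next
  case (Suc n)
  let ?M = "measure_pmf p" and ?S = "stream_space (measure_pmf p)"
  let ?C = "{w. stake (Suc n) w \<in> L}"
  define L' where "L' t = {l. t # l \<in> L}" for t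
  have C_sets: "?C \<in> sets ?S"
    unfolding sets_stream_space_measure_pmf by (rule cylinder_in_sets)
  have C_Cons: "{w \<in> space ?S. t ## w \<in> ?C} = {w. stake n w \<in> L' t}" for t
    by (auto simp: L'_def space_stream_space)
  have A_C_Cons: "{w \<in> space ?S. t ## w \<in> A x \<inter> ?C} = A (T t x) \<inter> {w. stake n w \<in> L' t}" for t
    by (auto simp: L'_def space_stream_space A_Cons)
  have "c * emeasure ?S ?C = c * (\<integral>\<^sup>+t. emeasure ?S {w. stake n w \<in> L' t} \<partial>?M)"
    unfolding prob_space.emeasure_stream_space[OF prob_space_measure_pmf C_sets] C_Cons ..
  also have "\<dots> = (\<integral>\<^sup>+t. c * emeasure ?S {w. stake n w \<in> L' t} \<partial>?M)"
    by (rule nn_integral_cmult[symmetric]) simp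
  also have "\<dots> \<le> (\<integral>\<^sup>+t. emeasure ?S (A (T t x) \<inter> {w. stake n w \<in> L' t}) \<partial>?M)"
    by (intro nn_integral_mono Suc.IH)
  also have "\<dots> = emeasure ?S (A x \<inter> ?C)"
    using prob_space.emeasure_stream_space[OF prob_space_measure_pmf sets.Int[OF A_sets[of x] C_sets]]
    unfolding A_C_Cons by (rule sym)
  finally show ?case .
qed

lemma measure_eq_1_if_uniformly_positive:
  fixes p :: "'a::countable pmf" and A :: "'b \<Rightarrow> 'a stream set"
  assumes A_Cons: "\<And>t w y. t ## w \<in> A y \<longleftrightarrow> w \<in> A (T t y)"
    and "0 < \<epsilon>" and A_ge: "\<And>y. \<epsilon> \<le> measure (stream_space (measure_pmf p)) (A y)"
  shows "measure (stream_space (measure_pmf p)) (A x) = 1"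
proof -
  let ?S = "stream_space (measure_pmf p)"
  interpret S: prob_space ?S
    by (rule prob_space.prob_space_stream_space[OF prob_space_measure_pmf])
  \<comment> \<open>A non-measurable set has measure 0, so the lower bound forces measurability.\<close>
  have A_sets: "A y \<in> sets ?S" for y
    using A_ge[of y] \<open>0 < \<epsilon>\<close> measure_notin_sets[of "A y" ?S] by force
  have "ennreal \<epsilon> \<le> emeasure ?S (A y)" for y
    using A_ge[of y] by (simp add: S.emeasure_eq_measure)
  note A_cylinder = emeasure_Int_cylinder_ge[where A = A and T = T, OF A_Cons A_sets this]
  have cylinder_ge: "\<epsilon> * measure ?S C \<le> measure ?S (A x \<inter> C)" if "C \<in> cylinders" for C
  proof -
    obtain n L where C: "C = {w. stake n w \<in> L}"
      using \<open>C \<in> cylinders\<close> by (rule cylinders_cases)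
    show ?thesis
      using A_cylinder[where x=x and n=n and L=L] \<open>0 < \<epsilon>\<close>
      by (simp add: C S.emeasure_eq_measure ennreal_mult[symmetric] ennreal_le_iff)
  qed
  have sets_S: "sets ?S = sigma_sets (space ?S) cylinders"
    by (simp add: sets_stream_space_measure_pmf sets_stream_space_cylinders space_stream_space)
  have "\<epsilon> * measure ?S (space ?S - A x) \<le> measure ?S (A x \<inter> (space ?S - A x))"
  proof (rule S.measure_Int_ge_of_generator[OF _ sets_S])
    show "algebra (space ?S) cylinders"
      using algebra_cylinders by (simp add: space_stream_space)
  qed (use A_sets cylinder_ge \<open>0 < \<epsilon>\<close> in auto)
  then have "measure ?S (space ?S - A x) = 0"
    using \<open>0 < \<epsilon>\<close> by (simp add: mult_le_0_iff measure_le_0_iff)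
  then show ?thesis
    using S.prob_compl[OF A_sets[of x]] by simp
qed

lemma walk_Suc_Cons: "walk f (t ## w) (Suc n) x = walk f w n (f t x)"
  by (induction n) auto

lemma filterlim_walk_Cons:
  "filterlim (\<lambda>n. walk f (t ## w) n x) F sequentially \<longleftrightarrow> filterlim (\<lambda>n. walk f w n (f t x)) F sequentially"
  by (subst filterlim_sequentially_Suc[symmetric]) (simp only: walk_Suc_Cons)

lemma measure_walk_filterlim_eq_1:
  assumes "0 < \<epsilon>"
    and "\<And>y. \<epsilon> \<le> measure (iid_space p) {w \<in> space (iid_space p). filterlim (\<lambda>n. walk f w n y) F sequentially}"
  shows "measure (iid_space p) {w \<in> space (iid_space p). filterlim (\<lambda>n. walk f w n x) F sequentially} = 1"
proof -
  have "measure (stream_space (measure_pmf p)) {w. filterlim (\<lambda>n. walk f w n x) F sequentially} = 1"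
  proof (rule measure_eq_1_if_uniformly_positive
      [where A = "\<lambda>y. {w. filterlim (\<lambda>n. walk f w n y) F sequentially}" and T = f and \<epsilon> = \<epsilon>])
    show "t ## w \<in> {w. filterlim (\<lambda>n. walk f w n y) F sequentially}
        \<longleftrightarrow> w \<in> {w. filterlim (\<lambda>n. walk f w n (f t y)) F sequentially}" for t w y
      by (simp add: filterlim_walk_Cons)
  qed (use assms in \<open>simp_all add: iid_space_def space_stream_space\<close>)
  then show ?thesis
    by (simp add: iid_space_def space_stream_space)
qed

theorem proposition1:
  fixes p :: "nat pmf" and f :: "nat \<Rightarrow> real \<Rightarrow> real"
  assumes "\<And>i. i \<in> set_pmf p \<Longrightarrow> homeo_plus (f i)"
  shows "((\<exists>\<epsilon>>0. \<forall>x. phi_plus p f x \<ge> \<epsilon>) \<longrightarrow> (\<forall>x. phi_plus p f x = 1))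
       \<and> ((\<exists>\<epsilon>>0. \<forall>x. phi_minus p f x \<ge> \<epsilon>) \<longrightarrow> (\<forall>x. phi_minus p f x = 1))"
  unfolding phi_plus_def phi_minus_def using measure_walk_filterlim_eq_1 by blast

end
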